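(* Let $L$ be a finite distributive lattice, $c(L)$ its set of complemented elements, and for $x\in c(L)$ with complement $x'$ let $L(x):=\{(y,z)\in\widetilde L: y\le x,\ z\le x'\}$. Then $$\widetilde L=\bigcup_{x\in c(L)}L(x)$$ if and only if every connected component of the Hasse diagram of the poset $\mathcal J(L)$ has a unique minimal element (i.e. has a least element).
   Context: $L$ has least element $\bot$ and greatest element $\top$; $x\in L$ is complemented if there is $x'$ with $x\wedge x'=\bot$, $x\vee x'=\top$ (the complement is unique since $L$ is distributive). $\widetilde L:=\{(x,y)\in L^2: x\wedge y=\bot\}$ with the product order. $\mathcal J(L)$ is the set of join-irreducible elements of $L$ (elements covering exactly one element), with the order induced from $L$. *)

theory Defs
  imports Main
begin

text \<open>Throughout, the finite distributive lattice L is the type 'a of class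
  {finite, distrib_lattice, bounded_lattice} (least element bot, greatest top).\<close>

definition complemented :: "'a::bounded_lattice \<Rightarrow> bool" where
  "complemented x \<longleftrightarrow> (\<exists>x'. inf x x' = bot \<and> sup x x' = top)"

definition complement_of :: "'a::bounded_lattice \<Rightarrow> 'a" where
  "complement_of x = (THE x'. inf x x' = bot \<and> sup x x' = top)"

definition cL :: "'a::bounded_lattice set" where
  "cL = {x. complemented x}"

definition Ltilde :: "('a::bounded_lattice \<times> 'a) set" where
  "Ltilde = {(y, z). inf y z = bot}"

definition Lx :: "'a::bounded_lattice \<Rightarrow> ('a \<times> 'a) set" where
  "Lx x = {(y, z). (y, z) \<in> Ltilde \<and> y \<le> x \<and> z \<le> complement_of x}"

definition covers :: "'a::order \<Rightarrow> 'a \<Rightarrow> bool" where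
  "covers x y \<longleftrightarrow> y < x \<and> \<not> (\<exists>z. y < z \<and> z < x)"

text \<open>Join-irreducible elements: elements covering exactly one element.\<close>
definition JL :: "'a::order set" where
  "JL = {x. \<exists>!y. covers x y}"

definition hasseJ :: "('a::order \<times> 'a) set" where
  "hasseJ = {(a, b). a \<in> JL \<and> b \<in> JL \<and> b < a \<and> \<not> (\<exists>c\<in>JL. b < c \<and> c < a)}"

definition componentJ :: "'a::order \<Rightarrow> 'a set" where
  "componentJ a = {b \<in> JL. (a, b) \<in> (hasseJ \<union> hasseJ\<inverse>)\<^sup>*}"

end

theory Submission
  imports Defs
begin

text \<open>
  In a finite distributive lattice every element is the join of the
  join-irreducibles below it, and join-irreducibles are join-prime.  A complemented
  element x splits \<open>\<J>(L)\<close> into the irreducibles below x and those below its complement x';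
  since an irreducible lies below one of them but never below both, this splitting is a
  union of connected components of the Hasse diagram of \<open>\<J>(L)\<close>.  Conversely, the join of
  any union of components is complemented, with the join of the remaining irreducibles
  as complement.

  (\<open>\<Longrightarrow>\<close>) If every disjoint pair (p,q) lies in some L(x), then two irreducibles in a common
  component are never disjoint; a minimal member m and any other member b then have an
  irreducible common lower bound, which lies in the component and so equals m.
  (\<open>\<Longleftarrow>\<close>) Given y \<sqinter> z = \<bottom>, let X be the union of the components meeting \<down>y; its join x is
  complemented, y \<le> x, and z \<le> x' because an irreducible below z cannot share a component
  with one below y (their common least element would lie below y \<sqinter> z).
\<close>

section \<open>Join-irreducible elements of a finite lattice\<close>

lemma lower_cover_above:
  fixes w a :: "'a::{finite, order}"
  assumes "w < a"
  shows "\<exists>v. w \<le> v \<and> covers a v"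
proof -
  have "finite {v. w \<le> v \<and> v < a}" by simp
  from finite_has_maximal2[OF this, of w] assms
  obtain v where v: "w \<le> v" "v < a" and vmax: "\<And>b. w \<le> b \<Longrightarrow> b < a \<Longrightarrow> v \<le> b \<Longrightarrow> v = b"
    by auto
  have "covers a v"
    unfolding covers_def using v vmax by (metis order.strict_implies_order order.trans less_le)
  with v show ?thesis by blast
qed

lemma JL_not_bot: "(a::'a::order_bot) \<in> JL \<Longrightarrow> a \<noteq> bot"
  unfolding JL_def covers_def by auto

text \<open>A join-irreducible element has a largest element strictly below it: its unique
  lower cover.\<close>
lemma JL_lower_cover:
  fixes a :: "'a::{finite, order}"
  assumes "a \<in> JL"
  obtains y where "y < a" and "\<And>w. w < a \<Longrightarrow> w \<le> y"
proof -
  from assms obtain y where y: "covers a y" and uniq: "\<And>y'. covers a y' \<Longrightarrow> y' = y"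
    unfolding JL_def by blast
  have "w \<le> y" if "w < a" for w
    using lower_cover_above[OF that] uniq by blast
  with y that show ?thesis unfolding covers_def by blast
qed

lemma JL_prime:
  fixes a :: "'a::{finite, distrib_lattice}"
  assumes "a \<in> JL" and "a \<le> sup b c"
  shows "a \<le> b \<or> a \<le> c"
proof (rule ccontr)
  assume n: "\<not> (a \<le> b \<or> a \<le> c)"
  obtain y where "y < a" and below: "\<And>w. w < a \<Longrightarrow> w \<le> y"
    using JL_lower_cover[OF assms(1)] by blast
  have "inf a b < a" "inf a c < a" using n by (auto simp: inf.strict_order_iff inf.absorb_iff1 inf_commute)
  then have "sup (inf a b) (inf a c) \<le> y" by (simp add: below)
  moreover have "a = sup (inf a b) (inf a c)"
    using assms(2) by (simp add: inf.absorb1 flip: inf_sup_distrib1)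
  ultimately show False using \<open>y < a\<close> by simp
qed

definition join_of :: "'a::{finite, bounded_lattice} set \<Rightarrow> 'a" where
  "join_of A = Sup_fin (insert bot A)"

lemma join_of_upper: "a \<in> A \<Longrightarrow> a \<le> join_of A"
  unfolding join_of_def by (rule Sup_fin.coboundedI) auto

lemma JL_prime_join_of:
  fixes a :: "'a::{finite, distrib_lattice, bounded_lattice}"
  assumes "a \<in> JL" and "a \<le> join_of A"
  shows "\<exists>b\<in>A. a \<le> b"
proof -
  have "finite A" by simp
  then have "a \<le> Sup_fin (insert bot A) \<Longrightarrow> \<exists>b\<in>A. a \<le> b"
  proof (induction A rule: finite_induct)
    case empty
    then show ?case using JL_not_bot[OF assms(1)] by (simp add: bot_unique)
  next
    case (insert x F)
    have "insert bot (insert x F) = insert x (insert bot F)" by auto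
    with insert.prems have "a \<le> sup x (Sup_fin (insert bot F))"
      by (simp add: Sup_fin.insert)
    with JL_prime[OF assms(1)] insert.IH show ?case by blast
  qed
  with assms(2) show ?thesis unfolding join_of_def by blast
qed

text \<open>A minimal element not below u is join-irreducible: two distinct lower covers
  would both lie below u, and so would their join, which is the element itself.\<close>
lemma JL_if_minimal_not_below:
  fixes w :: "'a::{finite, lattice, order_bot}"
  assumes "w \<noteq> bot" and small: "\<And>v. v < w \<Longrightarrow> v \<le> u" and "\<not> w \<le> u"
  shows "w \<in> JL"
proof -
  obtain v where v: "covers w v" using lower_cover_above[of bot w] assms(1) bot_less by blast
  have "v2 = v" if v2: "covers w v2" for v2
  proof (rule ccontr)
    assume ne: "v2 \<noteq> v"
    have lt: "v < w" "v2 < w" using v v2 unfolding covers_def by auto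
    have "sup v v2 = w"
    proof (rule ccontr)
      assume "sup v v2 \<noteq> w"
      with lt have "sup v v2 < w" by (simp add: less_le)
      with v v2 have "sup v v2 = v" "sup v v2 = v2"
        unfolding covers_def by (metis sup_ge1 sup_ge2 less_le)+
      with ne show False by simp
    qed
    moreover have "sup v v2 \<le> u" using small lt by simp
    ultimately show False using \<open>\<not> w \<le> u\<close> by simp
  qed
  with v show ?thesis unfolding JL_def by blast
qed

text \<open>Every element is the join of the join-irreducibles below it, in the form:
  to bound x from above it suffices to bound those join-irreducibles.\<close>
lemma le_if_JL_le:
  fixes x :: "'a::{finite, lattice, order_bot}"
  assumes "\<And>a. a \<in> JL \<Longrightarrow> a \<le> x \<Longrightarrow> a \<le> u"
  shows "x \<le> u"
proof (rule ccontr)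
  assume "\<not> x \<le> u"
  have "finite {w. w \<le> x \<and> \<not> w \<le> u}" by simp
  from finite_has_minimal2[OF this, of x] \<open>\<not> x \<le> u\<close>
  obtain w where w: "w \<le> x" "\<not> w \<le> u"
    and wmin: "\<And>b. b \<le> x \<Longrightarrow> \<not> b \<le> u \<Longrightarrow> b \<le> w \<Longrightarrow> w = b" by auto
  have "v \<le> u" if "v < w" for v
    using that wmin[of v] w(1) by force
  then have "w \<in> JL" using JL_if_minimal_not_below[of w u] w(2) by fastforce
  with assms w show False by blast
qed

lemma JL_below_nonbot:
  fixes x :: "'a::{finite, lattice, order_bot}"
  assumes "x \<noteq> bot"
  shows "\<exists>a\<in>JL. a \<le> x"
  using le_if_JL_le[of x bot] assms by (auto simp: bot_unique)

lemma complement_of_eq: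
  fixes x :: "'a::{distrib_lattice, bounded_lattice}"
  assumes "inf x u = bot" "sup x u = top"
  shows "complement_of x = u"
proof -
  have le: "v \<le> w" if "inf x v = bot" "sup x w = top" for v w
  proof -
    have "v = inf v (sup x w)" using that by simp
    also have "\<dots> = sup (inf x v) (inf v w)" by (simp add: inf_sup_distrib1 inf_commute)
    also have "\<dots> \<le> w" using that by simp
    finally show ?thesis .
  qed
  have uniq: "v = u" if "inf x v = bot" "sup x v = top" for v
    using le[of v u] le[of u v] assms that by (simp add: antisym)
  show ?thesis unfolding complement_of_def
    by (rule the_equality) (use assms uniq in blast)+
qed

section \<open>Connectivity in the Hasse diagram of \<open>\<J>(L)\<close>\<close>

abbreviation linkedJ :: "'a::order \<Rightarrow> 'a \<Rightarrow> bool" where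
  "linkedJ a b \<equiv> (a, b) \<in> (hasseJ \<union> hasseJ\<inverse>)\<^sup>*"

lemma linkedJ_sym: "linkedJ a b \<Longrightarrow> linkedJ b a"
  by (metis converse_Un converse_converse rtrancl_converseI sup_commute)

lemma linkedJ_trans: "linkedJ a b \<Longrightarrow> linkedJ b c \<Longrightarrow> linkedJ a c"
  by (rule rtrancl_trans)

text \<open>Comparable join-irreducibles are connected, by a maximal chain between them in
  \<open>\<J>(L)\<close>; formally by induction on the size of the open interval.\<close>
lemma linkedJ_if_le:
  fixes a b :: "'a::{finite, order}"
  assumes "a \<in> JL" "b \<in> JL" "a \<le> b"
  shows "linkedJ a b"
  using assms
proof (induction "card {c\<in>JL. a < c \<and> c < b}" arbitrary: a b rule: less_induct)
  case less
  show ?case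
  proof (cases "\<exists>c\<in>JL. a < c \<and> c < b")
    case False
    with less.prems have "a = b \<or> (b, a) \<in> hasseJ"
      unfolding hasseJ_def by (auto simp: less_le)
    then show ?thesis by blast
  next
    case True
    then obtain c where c: "c \<in> JL" "a < c" "c < b" by blast
    have "card {d\<in>JL. a < d \<and> d < c} < card {c\<in>JL. a < c \<and> c < b}"
         "card {d\<in>JL. c < d \<and> d < b} < card {c\<in>JL. a < c \<and> c < b}"
      by (rule psubset_card_mono; use c in auto)+
    with less c have "linkedJ a c" "linkedJ c b" by auto
    then show ?thesis by (rule linkedJ_trans)
  qed
qed

lemma componentJ_iff: "b \<in> componentJ a \<longleftrightarrow> b \<in> JL \<and> linkedJ a b"
  unfolding componentJ_def by simp

lemma componentJ_linked: "p \<in> componentJ a \<Longrightarrow> q \<in> componentJ a \<Longrightarrow> linkedJ p q"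
  unfolding componentJ_iff by (blast intro: linkedJ_sym linkedJ_trans)

section \<open>Complemented elements and unions of components\<close>

text \<open>The join-irreducibles below a complemented element form a union of components:
  crossing a Hasse edge upwards from below x cannot land below x'.\<close>
lemma complemented_below_closed:
  fixes x :: "'a::{finite, distrib_lattice, bounded_lattice}"
  assumes compl: "inf x u = bot" "sup x u = top"
    and "p \<le> x" "linkedJ p q"
  shows "q \<le> x"
  using assms(4,3)
proof (induction rule: rtrancl_induct)
  case (step c d)
  then have cd: "c \<in> JL" "d \<in> JL" "c < d \<or> d < c" unfolding hasseJ_def by auto
  show ?case
  proof (cases "d < c")
    case True with step show ?thesis by simp
  next
    case False
    with cd have "c \<le> d" by auto
    have "\<not> d \<le> u"
    proof
      assume "d \<le> u"
      with \<open>c \<le> d\<close> step have "c \<le> inf x u" by auto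
      with compl JL_not_bot[OF cd(1)] show False by (simp add: bot_unique)
    qed
    moreover have "d \<le> x \<or> d \<le> u" using JL_prime[OF cd(2)] compl by simp
    ultimately show ?thesis by blast
  qed
qed simp

lemma join_of_component_union:
  fixes X :: "'a::{finite, distrib_lattice, bounded_lattice} set"
  assumes "X \<subseteq> JL" and closed: "\<And>a b. a \<in> X \<Longrightarrow> b \<in> JL \<Longrightarrow> linkedJ a b \<Longrightarrow> b \<in> X"
  shows "inf (join_of X) (join_of (JL - X)) = bot"
    and "sup (join_of X) (join_of (JL - X)) = top"
proof -
  show "inf (join_of X) (join_of (JL - X)) = bot"
  proof (rule bot_unique[THEN iffD1], rule le_if_JL_le)
    fix a assume a: "a \<in> JL" and le: "a \<le> inf (join_of X) (join_of (JL - X))"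
    obtain b where b: "b \<in> X" "a \<le> b" using JL_prime_join_of[OF a] le by auto
    obtain c where c: "c \<in> JL" "c \<notin> X" "a \<le> c" using JL_prime_join_of[OF a] le by auto
    have "linkedJ a b" "linkedJ a c"
      using linkedJ_if_le a b c \<open>X \<subseteq> JL\<close> by blast+
    then have "linkedJ b c" by (blast intro: linkedJ_sym linkedJ_trans)
    with closed b c show "a \<le> bot" by blast
  qed
  show "sup (join_of X) (join_of (JL - X)) = top"
  proof (rule top_unique[THEN iffD1], rule le_if_JL_le)
    fix a :: 'a assume "a \<in> JL"
    then show "a \<le> sup (join_of X) (join_of (JL - X))"
      by (cases "a \<in> X") (auto intro: le_supI1 le_supI2 join_of_upper)
  qed
qed

text \<open>If every disjoint pair lies in some L(x), two members of one component are never
  disjoint: the irreducibles below x form a union of components, so they would both lie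
  below x and below x'.\<close>
lemma component_not_disjoint:
  fixes p :: "'a::{finite, distrib_lattice, bounded_lattice}"
  assumes cover: "(Ltilde :: ('a \<times> 'a) set) = (\<Union>x\<in>cL. Lx x)"
    and "p \<in> componentJ a" "q \<in> componentJ a"
  shows "inf p q \<noteq> bot"
proof
  assume "inf p q = bot"
  with cover obtain x where "x \<in> cL" "(p, q) \<in> Lx x" unfolding Ltilde_def by blast
  then obtain u where u: "inf x u = bot" "sup x u = top" "p \<le> x" "q \<le> u"
    unfolding cL_def complemented_def Lx_def using complement_of_eq by fastforce
  have "q \<le> x"
    using complemented_below_closed[OF u(1,2,3) componentJ_linked] assms(2,3) by blast
  with u have "q \<le> bot" by (metis inf.boundedI)
  with assms(3) JL_not_bot show False by (auto simp: componentJ_iff bot_unique)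
qed

text \<open>A component in which no two members are disjoint has a least element: a minimal
  member m and any other member b have a join-irreducible lower bound c, which lies in
  the component (being comparable with m), so c = m.\<close>
lemma component_least_if_not_disjoint:
  fixes a :: "'a::{finite, lattice, order_bot}"
  assumes "a \<in> JL" and meets: "\<And>p q. p \<in> componentJ a \<Longrightarrow> q \<in> componentJ a \<Longrightarrow> inf p q \<noteq> bot"
  shows "\<exists>m\<in>componentJ a. \<forall>b\<in>componentJ a. m \<le> b"
proof -
  have "a \<in> componentJ a" "finite (componentJ a)" using assms(1) by (auto simp: componentJ_iff)
  from finite_has_minimal[OF this(2)] this(1) obtain m where m: "m \<in> componentJ a"
    and mmin: "\<And>b. b \<in> componentJ a \<Longrightarrow> b \<le> m \<Longrightarrow> m = b" by blast
  have "m \<le> b" if b: "b \<in> componentJ a" for b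
  proof -
    obtain c where c: "c \<in> JL" "c \<le> m" "c \<le> b"
      using JL_below_nonbot[OF meets[OF m b]] by auto
    have "linkedJ c m" using m c by (intro linkedJ_if_le) (auto simp: componentJ_iff)
    then have "c \<in> componentJ a"
      using m c by (auto simp: componentJ_iff intro: linkedJ_trans linkedJ_sym)
    with mmin c show "m \<le> b" by metis
  qed
  with m show ?thesis by blast
qed

text \<open>If every component has a least element, a disjoint pair (y, z) lies in L(x) for
  x the join of all components meeting \<down>y.\<close>
lemma disjoint_pair_in_Lx:
  fixes y z :: "'a::{finite, distrib_lattice, bounded_lattice}"
  assumes least: "\<forall>a\<in>(JL :: 'a set). \<exists>m\<in>componentJ a. \<forall>b\<in>componentJ a. m \<le> b"
    and yz: "inf y z = bot"
  shows "\<exists>x\<in>cL. (y, z) \<in> Lx x"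
proof -
  define X where "X = {a\<in>JL. \<exists>d\<in>JL. d \<le> y \<and> linkedJ a d}"
  have closed: "b \<in> X" if "a \<in> X" "b \<in> JL" "linkedJ a b" for a b
    using that unfolding X_def by (blast intro: linkedJ_sym linkedJ_trans)
  define x where "x = join_of X"
  define x' where "x' = join_of (JL - X)"
  have compl: "inf x x' = bot" "sup x x' = top"
    unfolding x_def x'_def by (rule join_of_component_union; use closed X_def in blast)+
  have "y \<le> x"
    by (rule le_if_JL_le) (auto simp: x_def X_def intro!: join_of_upper)
  moreover have "z \<le> x'"
  proof (rule le_if_JL_le)
    fix a assume a: "a \<in> JL" "a \<le> z"
    have "a \<notin> X"
    proof
      assume "a \<in> X"
      then obtain d where d: "d \<in> JL" "d \<le> y" "linkedJ a d" unfolding X_def by blast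
      obtain m where m: "m \<in> componentJ a" "\<forall>b\<in>componentJ a. m \<le> b" using least a(1) by blast
      have "m \<le> a" "m \<le> d" using m a d by (auto simp: componentJ_iff)
      with a d yz have "m \<le> bot" by (metis inf.boundedI order_trans)
      with m JL_not_bot show False by (auto simp: componentJ_iff bot_unique)
    qed
    with a show "a \<le> x'" unfolding x'_def by (intro join_of_upper) simp
  qed
  moreover have "x \<in> cL" "complement_of x = x'"
    using compl complement_of_eq unfolding cL_def complemented_def by blast+
  ultimately show ?thesis using yz unfolding Lx_def Ltilde_def by auto
qed

theorem mainTheorem4:
  fixes L :: "'a::{finite, distrib_lattice, bounded_lattice} itself"
  shows "(Ltilde :: ('a \<times> 'a) set) = (\<Union>x\<in>cL. Lx x) \<longleftrightarrow>
    (\<forall>a\<in>(JL :: 'a set). \<exists>m\<in>componentJ a. \<forall>b\<in>componentJ a. m \<le> b)"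
proof
  assume "(Ltilde :: ('a \<times> 'a) set) = (\<Union>x\<in>cL. Lx x)"
  then show "\<forall>a\<in>(JL :: 'a set). \<exists>m\<in>componentJ a. \<forall>b\<in>componentJ a. m \<le> b"
    using component_least_if_not_disjoint component_not_disjoint by blast
next
  assume "\<forall>a\<in>(JL :: 'a set). \<exists>m\<in>componentJ a. \<forall>b\<in>componentJ a. m \<le> b"
  then have "Ltilde \<subseteq> (\<Union>x\<in>cL. Lx x :: ('a \<times> 'a) set)"
    using disjoint_pair_in_Lx unfolding Ltilde_def by blast
  moreover have "(\<Union>x\<in>cL. Lx x) \<subseteq> (Ltilde :: ('a \<times> 'a) set)" unfolding Lx_def by auto
  ultimately show "(Ltilde :: ('a \<times> 'a) set) = (\<Union>x\<in>cL. Lx x)" by (rule antisym)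
qed

end
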